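(* Let $\tau\in(0,1)$, $\lambda>0$, and let $P_{\lambda,\gamma}$ be either the MCP penalty (with $\gamma\ge 1$) or the SCAD penalty (with $\gamma\ge 2$). For $\sigma\ge 0$, $\mu>0$ and $\mathbf{w},\mathbf{w}'\in\mathbb{R}^{P+1}$ define $$\Phi_\sigma(\mathbf{w},\mathbf{w}',\mu)=\sum_{l=1}^{L}\tilde g_l(\mathbf{w}',\mu)+n\,P_{\lambda,\gamma}(\mathbf{w})+\sigma\|\mathbf{w}-\mathbf{w}'\|_2^2 .$$ Then $\Phi_\sigma$ is bounded from below on $\mathbb{R}^{P+1}\times\mathbb{R}^{P+1}\times(0,\infty)$.
   Context: There are $L$ clients. Client $l$ holds responses $\mathbf{y}^{(l)}=(y^{(l)}_1,\dots,y^{(l)}_{M_l})^\top\in\mathbb{R}^{M_l}$ and augmented feature vectors $\bar{\mathbf{x}}^{(l)}_i=[(\mathbf{x}^{(l)}_i)^\top,1]^\top\in\mathbb{R}^{P+1}$, $i=1,\dots,M_l$; $n=\sum_{l=1}^L M_l$. The smoothing function is $f(r,\mu)=|r|$ if $|r|\ge\mu$ and $f(r,\mu)=\frac{r^2}{2\mu}+\frac{\mu}{2}$ if $|r|<\mu$. The smoothed local loss is $\tilde g_l(\mathbf{w},\mu)=\frac12\sum_{i=1}^{M_l} f\big(y^{(l)}_i-(\bar{\mathbf{x}}^{(l)}_i)^\top\mathbf{w},\mu\big)+(\tau-\tfrac12)\sum_{i=1}^{M_l}\big(y^{(l)}_i-(\bar{\mathbf{x}}^{(l)}_i)^\top\mathbf{w}\big)$.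 The penalty is $P_{\lambda,\gamma}(\mathbf{w})=\sum_{p=1}^{P}g_{\lambda,\gamma}(w_p)$ (the last, intercept coordinate $w_{P+1}$ is not penalized), where for MCP $g_{\lambda,\gamma}(t)=\lambda|t|-\frac{t^2}{2\gamma}$ if $|t|\le\gamma\lambda$ and $=\frac{\gamma\lambda^2}{2}$ otherwise; for SCAD $g_{\lambda,\gamma}(t)=\lambda|t|$ if $|t|\le\lambda$, $=-\frac{t^2-2\gamma\lambda|t|+\lambda^2}{2(\gamma-1)}$ if $\lambda<|t|\le\gamma\lambda$, and $=\frac{(\gamma+1)\lambda^2}{2}$ if $|t|>\gamma\lambda$. *)

theory Defs
  imports Complex_Main
begin

text \<open>Vectors in R^(P+1) are represented as functions nat => real, using coordinates 1..P+1;
  the last coordinate P+1 is the intercept.\<close>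

definition fsmooth :: "real \<Rightarrow> real \<Rightarrow> real" where
  "fsmooth r mu = (if \<bar>r\<bar> \<ge> mu then \<bar>r\<bar> else r^2 / (2*mu) + mu/2)"

definition xbar :: "nat \<Rightarrow> (nat \<Rightarrow> nat \<Rightarrow> nat \<Rightarrow> real) \<Rightarrow> nat \<Rightarrow> nat \<Rightarrow> nat \<Rightarrow> real" where
  "xbar P x l i p = (if p = P + 1 then 1 else x l i p)"

definition inner_aug :: "nat \<Rightarrow> (nat \<Rightarrow> nat \<Rightarrow> nat \<Rightarrow> real) \<Rightarrow> nat \<Rightarrow> nat \<Rightarrow> (nat \<Rightarrow> real) \<Rightarrow> real" where
  "inner_aug P x l i w = (\<Sum>p=1..P+1. xbar P x l i p * w p)"

text \<open>Smoothed local loss of client l (M l samples, responses y l i, features x l i p).\<close>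
definition gtilde ::
  "real \<Rightarrow> nat \<Rightarrow> (nat \<Rightarrow> nat) \<Rightarrow> (nat \<Rightarrow> nat \<Rightarrow> real) \<Rightarrow> (nat \<Rightarrow> nat \<Rightarrow> nat \<Rightarrow> real)
    \<Rightarrow> nat \<Rightarrow> (nat \<Rightarrow> real) \<Rightarrow> real \<Rightarrow> real" where
  "gtilde tau P M y x l w mu =
     (1/2) * (\<Sum>i=1..M l. fsmooth (y l i - inner_aug P x l i w) mu)
     + (tau - 1/2) * (\<Sum>i=1..M l. y l i - inner_aug P x l i w)"

definition mcp :: "real \<Rightarrow> real \<Rightarrow> real \<Rightarrow> real" where
  "mcp lam gam t = (if \<bar>t\<bar> \<le> gam * lam then lam * \<bar>t\<bar> - t^2 / (2*gam) else gam * lam^2 / 2)"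

definition scad :: "real \<Rightarrow> real \<Rightarrow> real \<Rightarrow> real" where
  "scad lam gam t =
    (if \<bar>t\<bar> \<le> lam then lam * \<bar>t\<bar>
     else if \<bar>t\<bar> \<le> gam * lam then - (t^2 - 2*gam*lam*\<bar>t\<bar> + lam^2) / (2*(gam - 1))
     else (gam + 1) * lam^2 / 2)"

text \<open>Penalty P_{lambda,gamma}(w) = sum over p = 1..P of g(w_p) (intercept not penalized).\<close>
definition penalty :: "(real \<Rightarrow> real) \<Rightarrow> nat \<Rightarrow> (nat \<Rightarrow> real) \<Rightarrow> real" where
  "penalty g P w = (\<Sum>p=1..P. g (w p))"

definition sqdist :: "nat \<Rightarrow> (nat \<Rightarrow> real) \<Rightarrow> (nat \<Rightarrow> real) \<Rightarrow> real" where
  "sqdist P w w' = (\<Sum>p=1..P+1. (w p - w' p)^2)"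

definition Phi ::
  "real \<Rightarrow> (real \<Rightarrow> real) \<Rightarrow> real \<Rightarrow> nat \<Rightarrow> nat \<Rightarrow> (nat \<Rightarrow> nat) \<Rightarrow> (nat \<Rightarrow> nat \<Rightarrow> real)
    \<Rightarrow> (nat \<Rightarrow> nat \<Rightarrow> nat \<Rightarrow> real) \<Rightarrow> (nat \<Rightarrow> real) \<Rightarrow> (nat \<Rightarrow> real) \<Rightarrow> real \<Rightarrow> real" where
  "Phi tau g sigma L P M y x w w' mu =
     (\<Sum>l=1..L. gtilde tau P M y x l w' mu)
     + real (\<Sum>l=1..L. M l) * penalty g P w
     + sigma * sqdist P w w'"

end

theory Submission
  imports Defs
begin

text \<open>Every summand of \<open>Phi\<close> is nonnegative, so \<open>0\<close> is a lower bound. The smoothing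
  satisfies \<open>fsmooth r mu \<ge> \<bar>r\<bar>\<close>, hence each term of \<open>gtilde\<close> dominates the quantile check
  loss \<open>\<bar>r\<bar>/2 + (tau - 1/2) r = tau r\<^sup>+ + (1 - tau) r\<^sup>-\<close>, which is nonnegative; MCP and
  SCAD are nonnegative penalties.\<close>

lemma abs_le_fsmooth: "\<bar>r\<bar> \<le> fsmooth r mu"
proof (cases "\<bar>r\<bar> \<ge> mu")
  case True
  then show ?thesis by (simp add: fsmooth_def)
next
  case False
  then have "mu > 0" by linarith
  have "2 * mu * \<bar>r\<bar> \<le> r\<^sup>2 + mu\<^sup>2"
    using sum_squares_bound[of "\<bar>r\<bar>" mu] by (simp add: algebra_simps)
  then have "\<bar>r\<bar> \<le> r\<^sup>2 / (2 * mu) + mu / 2"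
    using \<open>mu > 0\<close> by (simp add: field_simps power2_eq_square)
  then show ?thesis using False by (simp add: fsmooth_def)
qed

lemma quantile_check_nonneg:
  fixes tau r :: real
  assumes "0 \<le> tau" "tau \<le> 1"
  shows "0 \<le> \<bar>r\<bar> / 2 + (tau - 1/2) * r"
proof (cases "r \<ge> 0")
  case True
  then show ?thesis using assms by (simp add: algebra_simps)
next
  case False
  then show ?thesis using assms by (simp add: algebra_simps mult_nonpos_nonpos)
qed

lemma fsmooth_check_nonneg:
  assumes "0 \<le> tau" "tau \<le> 1"
  shows "0 \<le> fsmooth r mu / 2 + (tau - 1/2) * r"
  using quantile_check_nonneg[OF assms, of r] abs_le_fsmooth[of r mu] by linarith

lemma gtilde_nonneg:
  assumes "0 \<le> tau" "tau \<le> 1"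
  shows "0 \<le> gtilde tau P M y x l w mu"
proof -
  have "gtilde tau P M y x l w mu =
      (\<Sum>i=1..M l. fsmooth (y l i - inner_aug P x l i w) mu / 2
        + (tau - 1/2) * (y l i - inner_aug P x l i w))"
    by (simp add: gtilde_def sum_distrib_left sum.distrib)
  also have "0 \<le> \<dots>"
    using fsmooth_check_nonneg[OF assms] by (simp add: sum_nonneg)
  finally show ?thesis .
qed

lemma mcp_nonneg:
  assumes "0 \<le> lam" "0 < gam"
  shows "0 \<le> mcp lam gam t"
proof (cases "\<bar>t\<bar> \<le> gam * lam")
  case True
  have "t\<^sup>2 = \<bar>t\<bar> * \<bar>t\<bar>" by (simp add: power2_eq_square)
  also have "\<dots> \<le> \<bar>t\<bar> * (gam * lam)" using True by (intro mult_left_mono) auto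
  finally have "t\<^sup>2 / (2 * gam) \<le> lam * \<bar>t\<bar> / 2"
    using assms by (simp add: field_simps)
  moreover have "0 \<le> lam * \<bar>t\<bar>" using assms by simp
  ultimately show ?thesis using True by (simp add: mcp_def)
next
  case False
  then show ?thesis using assms by (simp add: mcp_def)
qed

lemma scad_nonneg:
  assumes "0 \<le> lam" "1 \<le> gam"
  shows "0 \<le> scad lam gam t"
proof (cases "lam < \<bar>t\<bar> \<and> \<bar>t\<bar> \<le> gam * lam")
  case True
  have "t\<^sup>2 - 2 * gam * lam * \<bar>t\<bar> + lam\<^sup>2 =
      - ((\<bar>t\<bar> - lam) * (gam * lam - \<bar>t\<bar>)) - (gam - 1) * lam * (\<bar>t\<bar> + lam)"
    by (simp add: power2_eq_square algebra_simps)
  also have "\<dots> \<le> 0"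
  proof -
    have "0 \<le> (\<bar>t\<bar> - lam) * (gam * lam - \<bar>t\<bar>)" using True by simp
    moreover have "0 \<le> (gam - 1) * lam * (\<bar>t\<bar> + lam)" using assms by simp
    ultimately show ?thesis by linarith
  qed
  finally show ?thesis
    using True assms by (simp add: scad_def divide_nonpos_nonneg)
next
  case False
  then show ?thesis using assms by (auto simp: scad_def)
qed

lemma penalty_nonneg:
  assumes "\<And>t. 0 \<le> g t"
  shows "0 \<le> penalty g P w"
  unfolding penalty_def using assms by (simp add: sum_nonneg)

lemma sqdist_nonneg: "0 \<le> sqdist P w w'"
  unfolding sqdist_def by (simp add: sum_nonneg)

lemma Phi_nonneg:
  assumes "0 \<le> tau" "tau \<le> 1" "\<And>t. 0 \<le> g t" "0 \<le> sigma"
  shows "0 \<le> Phi tau g sigma L P M y x w w' mu"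
  unfolding Phi_def
  using gtilde_nonneg[OF assms(1,2)] penalty_nonneg[OF assms(3)] sqdist_nonneg assms(4)
  by (simp add: sum_nonneg)

theorem lemma1:
  fixes tau lam gam sigma :: real and L P :: nat and M :: "nat \<Rightarrow> nat"
    and y :: "nat \<Rightarrow> nat \<Rightarrow> real" and x :: "nat \<Rightarrow> nat \<Rightarrow> nat \<Rightarrow> real"
    and g :: "real \<Rightarrow> real \<Rightarrow> real \<Rightarrow> real"
  assumes "0 < tau" "tau < 1" "0 < lam"
    and "(g = mcp \<and> gam \<ge> 1) \<or> (g = scad \<and> gam \<ge> 2)"
    and "sigma \<ge> 0"
  shows "\<exists>B. \<forall>w w' :: nat \<Rightarrow> real. \<forall>mu > 0.
           B \<le> Phi tau (g lam gam) sigma L P M y x w w' mu"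
proof -
  have "0 \<le> g lam gam t" for t
    using assms(3,4) mcp_nonneg[of lam gam t] scad_nonneg[of lam gam t] by auto
  then have "0 \<le> Phi tau (g lam gam) sigma L P M y x w w' mu" for w w' mu
    using Phi_nonneg assms(1,2,5) by simp
  then show ?thesis by blast
qed

end
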